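(* Let $(\mathcal R,\Sigma,\Delta)$ be a right triangulated category with right semi-equivalence and let $(\mathcal U,\mathcal V)$ be a torsion pair in $\mathcal R$. The following are equivalent: (a) $\Sigma\mathcal U\subseteq\mathcal U$; (b) $\Sigma^{-1}\mathcal V\subseteq\mathcal V$, where $\Sigma^{-1}\mathcal V=\{X\in\mathcal R:\Sigma X\in\mathcal V\}$; (c) $\mathcal R(\Sigma\mathcal U,\mathcal V)=0$; (d) $\Sigma$ maps $\mathcal V$-monic morphisms to $\mathcal V$-monic morphisms.
   Context: All categories are additive and idempotent complete. A right triangulated category $(\mathcal R,\Sigma,\Delta)$: additive category, additive endofunctor $\Sigma$, class $\Delta$ of right triangles $A\to B\to C\to\Sigma A$ satisfying the axioms of a triangulated category except that $\Sigma$ need not be an equivalence and only rotation to the right ($B\xrightarrow{y}C\xrightarrow{z}\Sigma A\xrightarrow{-\Sigma x}\Sigma B$) is required. $\Sigma$ is a right semi-equivalence if it is fully faithful and its essential image is closed under extensions in right triangles. A torsion pair in $\mathcal R$ is a pair $(\mathcal U,\mathcal V)$ of additive subcategories (closed under isomorphisms, sums, summands) with $\mathcal R(\mathcal U,\mathcal V)=0$ such that each $C\in\mathcal R$ admits a right triangle $U\to C\to V\to\Sigma U$ with $U\in\mathcal U$, $V\in\mathcal V$. A morphism $f:A\to B$ is $\mathcal V$-monic if every morphism $A\to V$ with $V\in\mathcal V$ factors through $f$. *)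

theory Defs
  imports Main
begin

text \<open>Categories are encoded concretely: objects form the type 'o, morphisms are raw
elements of type 'm, and membership in a hom-set is given by hom A B.
Composition cmp g f means g after f. The additive structure is given per hom-set.\<close>

record ('o,'m) addcat =
  hom  :: "'o \<Rightarrow> 'o \<Rightarrow> 'm set"
  cmp  :: "'m \<Rightarrow> 'm \<Rightarrow> 'm"
  idm  :: "'o \<Rightarrow> 'm"
  madd :: "'m \<Rightarrow> 'm \<Rightarrow> 'm"
  mzero :: "'o \<Rightarrow> 'o \<Rightarrow> 'm"
  mneg :: "'m \<Rightarrow> 'm"

definition is_category :: "('o,'m) addcat \<Rightarrow> bool" where
  "is_category C \<longleftrightarrow>
     (\<forall>A. idm C A \<in> hom C A A) \<and>
     (\<forall>A B D f g. f \<in> hom C A B \<longrightarrow> g \<in> hom C B D \<longrightarrow> cmp C g f \<in> hom C A D) \<and>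
     (\<forall>A B D E f g h. f \<in> hom C A B \<longrightarrow> g \<in> hom C B D \<longrightarrow> h \<in> hom C D E \<longrightarrow>
         cmp C h (cmp C g f) = cmp C (cmp C h g) f) \<and>
     (\<forall>A B f. f \<in> hom C A B \<longrightarrow> cmp C f (idm C A) = f \<and> cmp C (idm C B) f = f)"

definition is_preadditive :: "('o,'m) addcat \<Rightarrow> bool" where
  "is_preadditive C \<longleftrightarrow> is_category C \<and>
     (\<forall>A B. mzero C A B \<in> hom C A B) \<and>
     (\<forall>A B f g. f \<in> hom C A B \<longrightarrow> g \<in> hom C A B \<longrightarrow> madd C f g \<in> hom C A B) \<and>
     (\<forall>A B f. f \<in> hom C A B \<longrightarrow> mneg C f \<in> hom C A B) \<and>
     (\<forall>A B f g h. f \<in> hom C A B \<longrightarrow> g \<in> hom C A B \<longrightarrow> h \<in> hom C A B \<longrightarrow>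
         madd C (madd C f g) h = madd C f (madd C g h)) \<and>
     (\<forall>A B f g. f \<in> hom C A B \<longrightarrow> g \<in> hom C A B \<longrightarrow> madd C f g = madd C g f) \<and>
     (\<forall>A B f. f \<in> hom C A B \<longrightarrow> madd C f (mzero C A B) = f) \<and>
     (\<forall>A B f. f \<in> hom C A B \<longrightarrow> madd C f (mneg C f) = mzero C A B) \<and>
     (\<forall>A B D f g g'. f \<in> hom C A B \<longrightarrow> g \<in> hom C B D \<longrightarrow> g' \<in> hom C B D \<longrightarrow>
         cmp C (madd C g g') f = madd C (cmp C g f) (cmp C g' f)) \<and>
     (\<forall>A B D f f' g. f \<in> hom C A B \<longrightarrow> f' \<in> hom C A B \<longrightarrow> g \<in> hom C B D \<longrightarrow>
         cmp C g (madd C f f') = madd C (cmp C g f) (cmp C g f'))"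

definition is_zero_obj :: "('o,'m) addcat \<Rightarrow> 'o \<Rightarrow> bool" where
  "is_zero_obj C Z \<longleftrightarrow> (\<forall>X. (\<exists>!f. f \<in> hom C Z X) \<and> (\<exists>!f. f \<in> hom C X Z))"

definition is_biproduct :: "('o,'m) addcat \<Rightarrow> 'o \<Rightarrow> 'o \<Rightarrow> 'o \<Rightarrow> bool" where
  "is_biproduct C X Y W \<longleftrightarrow> (\<exists>i1 i2 p1 p2.
     i1 \<in> hom C Y X \<and> i2 \<in> hom C W X \<and> p1 \<in> hom C X Y \<and> p2 \<in> hom C X W \<and>
     cmp C p1 i1 = idm C Y \<and> cmp C p2 i2 = idm C W \<and>
     cmp C p2 i1 = mzero C Y W \<and> cmp C p1 i2 = mzero C W Y \<and>
     madd C (cmp C i1 p1) (cmp C i2 p2) = idm C X)"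

definition is_additive :: "('o,'m) addcat \<Rightarrow> bool" where
  "is_additive C \<longleftrightarrow> is_preadditive C \<and> (\<exists>Z. is_zero_obj C Z) \<and>
     (\<forall>Y W. \<exists>X. is_biproduct C X Y W)"

definition idem_complete :: "('o,'m) addcat \<Rightarrow> bool" where
  "idem_complete C \<longleftrightarrow> (\<forall>A e. e \<in> hom C A A \<longrightarrow> cmp C e e = e \<longrightarrow>
     (\<exists>B r s. r \<in> hom C A B \<and> s \<in> hom C B A \<and> cmp C s r = e \<and> cmp C r s = idm C B))"

definition is_iso :: "('o,'m) addcat \<Rightarrow> 'o \<Rightarrow> 'o \<Rightarrow> 'm \<Rightarrow> bool" where
  "is_iso C A B f \<longleftrightarrow> f \<in> hom C A B \<and>
     (\<exists>g \<in> hom C B A. cmp C g f = idm C A \<and> cmp C f g = idm C B)"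

definition iso_objs :: "('o,'m) addcat \<Rightarrow> 'o \<Rightarrow> 'o \<Rightarrow> bool" where
  "iso_objs C A B \<longleftrightarrow> (\<exists>f. is_iso C A B f)"

definition additive_endofunctor ::
  "('o,'m) addcat \<Rightarrow> ('o \<Rightarrow> 'o) \<Rightarrow> ('m \<Rightarrow> 'm) \<Rightarrow> bool" where
  "additive_endofunctor C So Sm \<longleftrightarrow>
     (\<forall>A B f. f \<in> hom C A B \<longrightarrow> Sm f \<in> hom C (So A) (So B)) \<and>
     (\<forall>A. Sm (idm C A) = idm C (So A)) \<and>
     (\<forall>A B D f g. f \<in> hom C A B \<longrightarrow> g \<in> hom C B D \<longrightarrow> Sm (cmp C g f) = cmp C (Sm g) (Sm f)) \<and>
     (\<forall>A B f g. f \<in> hom C A B \<longrightarrow> g \<in> hom C A B \<longrightarrow> Sm (madd C f g) = madd C (Sm f) (Sm g))"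

text \<open>A right triangle A --x--> B --y--> C --z--> So A is encoded as (A,B,C,x,y,z).\<close>
type_synonym ('o,'m) tri = "'o \<times> 'o \<times> 'o \<times> 'm \<times> 'm \<times> 'm"

definition is_tri :: "('o,'m) addcat \<Rightarrow> ('o \<Rightarrow> 'o) \<Rightarrow> ('o,'m) tri \<Rightarrow> bool" where
  "is_tri C So T \<longleftrightarrow> (case T of (A,B,D,x,y,z) \<Rightarrow>
     x \<in> hom C A B \<and> y \<in> hom C B D \<and> z \<in> hom C D (So A))"

definition tri_iso :: "('o,'m) addcat \<Rightarrow> ('m \<Rightarrow> 'm) \<Rightarrow> ('o,'m) tri \<Rightarrow> ('o,'m) tri \<Rightarrow> bool" where
  "tri_iso C Sm T T' \<longleftrightarrow> (case T of (A,B,D,x,y,z) \<Rightarrow> case T' of (A',B',D',x',y',z') \<Rightarrow>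
     (\<exists>a b c. is_iso C A A' a \<and> is_iso C B B' b \<and> is_iso C D D' c \<and>
        cmp C b x = cmp C x' a \<and> cmp C c y = cmp C y' b \<and> cmp C (Sm a) z = cmp C z' c))"

definition right_triangulated ::
  "('o,'m) addcat \<Rightarrow> ('o \<Rightarrow> 'o) \<Rightarrow> ('m \<Rightarrow> 'm) \<Rightarrow> ('o,'m) tri set \<Rightarrow> bool" where
  "right_triangulated C So Sm \<Delta> \<longleftrightarrow>
     is_additive C \<and> idem_complete C \<and> additive_endofunctor C So Sm \<and>
     (\<forall>T\<in>\<Delta>. is_tri C So T) \<and>
     \<comment> \<open>RT1: closure under isomorphism of triangles\<close>
     (\<forall>T T'. T \<in> \<Delta> \<longrightarrow> is_tri C So T' \<longrightarrow> tri_iso C Sm T T' \<longrightarrow> T' \<in> \<Delta>) \<and>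
     \<comment> \<open>RT1: A --1--> A --> 0 --> So A\<close>
     (\<forall>A Z. is_zero_obj C Z \<longrightarrow> (A, A, Z, idm C A, mzero C A Z, mzero C Z (So A)) \<in> \<Delta>) \<and>
     \<comment> \<open>RT1: every morphism embeds in a right triangle\<close>
     (\<forall>A B x. x \<in> hom C A B \<longrightarrow> (\<exists>D y z. (A, B, D, x, y, z) \<in> \<Delta>)) \<and>
     \<comment> \<open>RT2: rotation to the right\<close>
     (\<forall>A B D x y z. (A, B, D, x, y, z) \<in> \<Delta> \<longrightarrow>
        (B, D, So A, y, z, mneg C (Sm x)) \<in> \<Delta>) \<and>
     \<comment> \<open>RT3: morphisms of triangles\<close>
     (\<forall>A B D x y z A' B' D' x' y' z' a b.
        (A, B, D, x, y, z) \<in> \<Delta> \<longrightarrow> (A', B', D', x', y', z') \<in> \<Delta> \<longrightarrow>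
        a \<in> hom C A A' \<longrightarrow> b \<in> hom C B B' \<longrightarrow> cmp C b x = cmp C x' a \<longrightarrow>
        (\<exists>c \<in> hom C D D'. cmp C c y = cmp C y' b \<and> cmp C (Sm a) z = cmp C z' c)) \<and>
     \<comment> \<open>RT4: octahedral axiom\<close>
     (\<forall>X Y Z Z' X' Y' u j k v l i m n.
        (X, Y, Z', u, j, k) \<in> \<Delta> \<longrightarrow> (Y, Z, X', v, l, i) \<in> \<Delta> \<longrightarrow>
        (X, Z, Y', cmp C v u, m, n) \<in> \<Delta> \<longrightarrow>
        (\<exists>f g. (Z', Y', X', f, g, cmp C (Sm j) i) \<in> \<Delta> \<and>
           cmp C f j = cmp C m v \<and> cmp C n f = k \<and> cmp C g m = l \<and>
           cmp C i g = cmp C (Sm u) n))"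

definition right_semi_equivalence ::
  "('o,'m) addcat \<Rightarrow> ('o \<Rightarrow> 'o) \<Rightarrow> ('m \<Rightarrow> 'm) \<Rightarrow> ('o,'m) tri set \<Rightarrow> bool" where
  "right_semi_equivalence C So Sm \<Delta> \<longleftrightarrow>
     (\<forall>A B. bij_betw Sm (hom C A B) (hom C (So A) (So B))) \<and>
     (\<forall>A B D x y z. (A, B, D, x, y, z) \<in> \<Delta> \<longrightarrow>
        (\<exists>A0. iso_objs C A (So A0)) \<longrightarrow> (\<exists>D0. iso_objs C D (So D0)) \<longrightarrow>
        (\<exists>B0. iso_objs C B (So B0)))"

definition additive_subcat :: "('o,'m) addcat \<Rightarrow> 'o set \<Rightarrow> bool" where
  "additive_subcat C S \<longleftrightarrow>
     (\<exists>Z\<in>S. is_zero_obj C Z) \<and>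
     (\<forall>X Y. X \<in> S \<longrightarrow> iso_objs C X Y \<longrightarrow> Y \<in> S) \<and>
     (\<forall>X Y W. is_biproduct C X Y W \<longrightarrow> Y \<in> S \<longrightarrow> W \<in> S \<longrightarrow> X \<in> S) \<and>
     (\<forall>X Y W. is_biproduct C X Y W \<longrightarrow> X \<in> S \<longrightarrow> Y \<in> S)"

definition hom_vanish :: "('o,'m) addcat \<Rightarrow> 'o set \<Rightarrow> 'o set \<Rightarrow> bool" where
  "hom_vanish C S T \<longleftrightarrow> (\<forall>X\<in>S. \<forall>Y\<in>T. hom C X Y = {mzero C X Y})"

definition torsion_pair ::
  "('o,'m) addcat \<Rightarrow> ('o \<Rightarrow> 'o) \<Rightarrow> ('o,'m) tri set \<Rightarrow> 'o set \<Rightarrow> 'o set \<Rightarrow> bool" where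
  "torsion_pair C So \<Delta> U V \<longleftrightarrow> additive_subcat C U \<and> additive_subcat C V \<and>
     hom_vanish C U V \<and>
     (\<forall>D. \<exists>X Y f g h. X \<in> U \<and> Y \<in> V \<and> (X, D, Y, f, g, h) \<in> \<Delta>)"

definition V_monic :: "('o,'m) addcat \<Rightarrow> 'o set \<Rightarrow> 'o \<Rightarrow> 'o \<Rightarrow> 'm \<Rightarrow> bool" where
  "V_monic C V A B f \<longleftrightarrow> f \<in> hom C A B \<and>
     (\<forall>Y\<in>V. \<forall>g\<in>hom C A Y. \<exists>h\<in>hom C B Y. cmp C h f = g)"

end

theory Submission
  imports Defs
begin

text \<open>Because \<open>\<Sigma>\<close> is fully faithful, \<open>\<R>(W, -)\<close> and \<open>\<R>(-, W)\<close> are exact in the middle of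
every right triangle, and \<open>\<V>\<close> is exactly the right perpendicular category of \<open>\<U>\<close>. Everything
then happens in the torsion triangles \<open>X \<rightarrow> A \<rightarrow> Y \<rightarrow> \<Sigma>X\<close>. For (b) \<open>\<Longrightarrow>\<close> (a) with
\<open>A = \<Sigma>u\<close>, extension closure of the essential image (applied to the rotated triangle) gives
\<open>Y \<cong> \<Sigma>B\<close>, and \<open>B \<in> \<V>\<close> by (b); so \<open>\<Sigma>u \<rightarrow> Y\<close> is \<open>\<Sigma>\<close> of a map \<open>u \<rightarrow> B\<close>, hence zero, and \<open>\<Sigma>u\<close> is
a retract of \<open>X\<close>. For (c) \<open>\<Longrightarrow>\<close> (d), a map from \<open>\<Sigma>A\<close> into \<open>\<V>\<close> kills \<open>\<Sigma>X \<rightarrow> \<Sigma>A\<close>, so it factors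
through \<open>\<Sigma>A \<rightarrow> \<Sigma>Y\<close>, and \<open>A \<rightarrow> Y\<close> factors through the \<open>\<V>\<close>-monic map. For (d) \<open>\<Longrightarrow>\<close> (c),
\<open>u \<rightarrow> 0\<close> is \<open>\<V>\<close>-monic whenever \<open>u \<in> \<U>\<close>.\<close>

locale preadditive_cat =
  fixes C :: "('o,'m) addcat"
  assumes preadditive: "is_preadditive C"
begin

lemma id_in_hom: "idm C A \<in> hom C A A"
  using preadditive unfolding is_preadditive_def is_category_def by (elim conjE) metis

lemma comp_in_hom: "f \<in> hom C A B \<Longrightarrow> g \<in> hom C B D \<Longrightarrow> cmp C g f \<in> hom C A D"
  using preadditive unfolding is_preadditive_def is_category_def by (elim conjE) metis

lemma comp_assoc:
  "f \<in> hom C A B \<Longrightarrow> g \<in> hom C B D \<Longrightarrow> h \<in> hom C D E \<Longrightarrow>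
   cmp C h (cmp C g f) = cmp C (cmp C h g) f"
  using preadditive unfolding is_preadditive_def is_category_def by (elim conjE) metis

lemma comp_id_right: "f \<in> hom C A B \<Longrightarrow> cmp C f (idm C A) = f"
  using preadditive unfolding is_preadditive_def is_category_def by (elim conjE) metis

lemma comp_id_left: "f \<in> hom C A B \<Longrightarrow> cmp C (idm C B) f = f"
  using preadditive unfolding is_preadditive_def is_category_def by (elim conjE) metis

lemma zero_in_hom: "mzero C A B \<in> hom C A B"
  using preadditive unfolding is_preadditive_def by (elim conjE) metis

lemma add_in_hom: "f \<in> hom C A B \<Longrightarrow> g \<in> hom C A B \<Longrightarrow> madd C f g \<in> hom C A B"
  using preadditive unfolding is_preadditive_def by (elim conjE) metis

lemma neg_in_hom: "f \<in> hom C A B \<Longrightarrow> mneg C f \<in> hom C A B"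
  using preadditive unfolding is_preadditive_def by (elim conjE) metis

lemma add_assoc:
  "f \<in> hom C A B \<Longrightarrow> g \<in> hom C A B \<Longrightarrow> h \<in> hom C A B \<Longrightarrow>
   madd C (madd C f g) h = madd C f (madd C g h)"
  using preadditive unfolding is_preadditive_def by (elim conjE) metis

lemma add_commute: "f \<in> hom C A B \<Longrightarrow> g \<in> hom C A B \<Longrightarrow> madd C f g = madd C g f"
  using preadditive unfolding is_preadditive_def by (elim conjE) metis

lemma add_zero_right: "f \<in> hom C A B \<Longrightarrow> madd C f (mzero C A B) = f"
  using preadditive unfolding is_preadditive_def by (elim conjE) metis

lemma add_neg_right: "f \<in> hom C A B \<Longrightarrow> madd C f (mneg C f) = mzero C A B"
  using preadditive unfolding is_preadditive_def by (elim conjE) metis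

lemma comp_add_left:
  "f \<in> hom C A B \<Longrightarrow> g \<in> hom C B D \<Longrightarrow> g' \<in> hom C B D \<Longrightarrow>
   cmp C (madd C g g') f = madd C (cmp C g f) (cmp C g' f)"
  using preadditive unfolding is_preadditive_def by (elim conjE) metis

lemma comp_add_right:
  "f \<in> hom C A B \<Longrightarrow> f' \<in> hom C A B \<Longrightarrow> g \<in> hom C B D \<Longrightarrow>
   cmp C g (madd C f f') = madd C (cmp C g f) (cmp C g f')"
  using preadditive unfolding is_preadditive_def by (elim conjE) metis

lemma add_zero_left: "f \<in> hom C A B \<Longrightarrow> madd C (mzero C A B) f = f"
  using add_commute[OF zero_in_hom] add_zero_right by simp

lemma neg_unique:
  assumes f: "f \<in> hom C A B" and g: "g \<in> hom C A B" and fg: "madd C f g = mzero C A B"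
  shows "g = mneg C f"
proof -
  have nf: "mneg C f \<in> hom C A B" using neg_in_hom[OF f] .
  have "g = madd C g (madd C f (mneg C f))" using add_neg_right[OF f] add_zero_right[OF g] by simp
  also have "\<dots> = madd C (madd C f g) (mneg C f)"
    using add_assoc[OF g f nf] add_commute[OF f g] by simp
  also have "\<dots> = mneg C f" using fg add_zero_left[OF nf] by simp
  finally show ?thesis .
qed

lemma add_self_eq_zero:
  assumes f: "f \<in> hom C A B" and ff: "madd C f f = f"
  shows "f = mzero C A B"
proof -
  have nf: "mneg C f \<in> hom C A B" using neg_in_hom[OF f] .
  have "f = madd C f (madd C f (mneg C f))" using add_neg_right[OF f] add_zero_right[OF f] by simp
  also have "\<dots> = madd C (madd C f f) (mneg C f)" using add_assoc[OF f f nf] by simp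
  also have "\<dots> = mzero C A B" using ff add_neg_right[OF f] by simp
  finally show ?thesis .
qed

lemma comp_zero_right: "g \<in> hom C B D \<Longrightarrow> cmp C g (mzero C A B) = mzero C A D"
  using add_self_eq_zero[OF comp_in_hom[OF zero_in_hom]] comp_add_right[OF zero_in_hom zero_in_hom]
    add_zero_right[OF zero_in_hom]
  by metis

lemma comp_zero_left: "f \<in> hom C A B \<Longrightarrow> cmp C (mzero C B D) f = mzero C A D"
  using add_self_eq_zero[OF comp_in_hom[OF _ zero_in_hom]] comp_add_left[OF _ zero_in_hom zero_in_hom]
    add_zero_right[OF zero_in_hom]
  by metis

lemma neg_zero: "mneg C (mzero C A B) = mzero C A B"
  using neg_unique[OF zero_in_hom zero_in_hom add_zero_right[OF zero_in_hom]] by simp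

lemma neg_neg: "f \<in> hom C A B \<Longrightarrow> mneg C (mneg C f) = f"
  using neg_unique[OF neg_in_hom _ _] add_commute[OF neg_in_hom] add_neg_right by metis

lemma neg_cancel: "f \<in> hom C A B \<Longrightarrow> g \<in> hom C A B \<Longrightarrow> mneg C f = mneg C g \<Longrightarrow> f = g"
  using neg_neg by metis

lemma comp_neg_right:
  assumes f: "f \<in> hom C A B" and g: "g \<in> hom C B D"
  shows "cmp C g (mneg C f) = mneg C (cmp C g f)"
proof (rule neg_unique)
  show "cmp C g f \<in> hom C A D" "cmp C g (mneg C f) \<in> hom C A D"
    using comp_in_hom f g neg_in_hom by blast+
  show "madd C (cmp C g f) (cmp C g (mneg C f)) = mzero C A D"
    using comp_add_right[OF f neg_in_hom[OF f] g] add_neg_right[OF f] comp_zero_right[OF g] by simp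
qed

lemma comp_neg_left:
  assumes f: "f \<in> hom C A B" and g: "g \<in> hom C B D"
  shows "cmp C (mneg C g) f = mneg C (cmp C g f)"
proof (rule neg_unique)
  show "cmp C g f \<in> hom C A D" "cmp C (mneg C g) f \<in> hom C A D"
    using comp_in_hom f g neg_in_hom by blast+
  show "madd C (cmp C g f) (cmp C (mneg C g) f) = mzero C A D"
    using comp_add_left[OF f g neg_in_hom[OF g]] add_neg_right[OF g] comp_zero_left[OF f] by simp
qed

lemma complement_of_split_idempotent:
  assumes s: "s \<in> hom C Y X" and r: "r \<in> hom C X Y" and rs: "cmp C r s = idm C Y"
  defines "e \<equiv> madd C (idm C X) (mneg C (cmp C s r))"
  shows "e \<in> hom C X X" and "cmp C e e = e"
    and "cmp C e s = mzero C Y X" and "cmp C r e = mzero C X Y"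
    and "madd C (cmp C s r) e = idm C X"
proof -
  define p where "p = cmp C s r"
  have p: "p \<in> hom C X X" unfolding p_def by (rule comp_in_hom[OF r s])
  have np: "mneg C p \<in> hom C X X" by (rule neg_in_hom[OF p])
  show e: "e \<in> hom C X X" unfolding e_def p_def[symmetric] by (rule add_in_hom[OF id_in_hom np])
  have rp: "cmp C r p = r" unfolding p_def using comp_assoc[OF r s r] rs comp_id_left[OF r] by simp
  have ps: "cmp C p s = s" unfolding p_def using comp_assoc[OF s r s] rs comp_id_right[OF s] by simp
  have pp: "cmp C p p = p" using comp_assoc[OF p r s] rp unfolding p_def by simp
  have pe: "cmp C p e = mzero C X X"
    unfolding e_def p_def[symmetric]
    using comp_add_right[OF id_in_hom np p] comp_id_right[OF p] comp_neg_right[OF p p] pp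
      add_neg_right[OF p] by simp
  show "cmp C e e = e"
    using comp_add_left[OF e id_in_hom np] comp_id_left[OF e] comp_neg_left[OF e p] pe neg_zero
      add_zero_right[OF e]
    unfolding e_def p_def[symmetric] by simp
  show "cmp C e s = mzero C Y X"
    unfolding e_def p_def[symmetric]
    using comp_add_left[OF s id_in_hom np] comp_id_left[OF s] comp_neg_left[OF s p] ps
      add_neg_right[OF s] by simp
  show "cmp C r e = mzero C X Y"
    unfolding e_def p_def[symmetric]
    using comp_add_right[OF id_in_hom np r] comp_id_right[OF r] comp_neg_right[OF p r] rp
      add_neg_right[OF r] by simp
  have "madd C p (madd C (idm C X) (mneg C p)) = madd C (idm C X) (madd C p (mneg C p))"
    using add_assoc[OF p id_in_hom np] add_assoc[OF id_in_hom p np] add_commute[OF p id_in_hom]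
    by metis
  then show "madd C (cmp C s r) e = idm C X"
    unfolding e_def p_def[symmetric] using add_neg_right[OF p] add_zero_right[OF id_in_hom] by simp
qed

text \<open>In an idempotent complete category the complementary idempotent \<open>1 - s r\<close> splits
through some \<open>W\<close>, exhibiting \<open>X\<close> as \<open>Y \<oplus> W\<close>.\<close>
lemma retract_is_biproduct_summand:
  assumes idem: "idem_complete C"
    and s: "s \<in> hom C Y X" and r: "r \<in> hom C X Y" and rs: "cmp C r s = idm C Y"
  shows "\<exists>W. is_biproduct C X Y W"
proof -
  define e where "e = madd C (idm C X) (mneg C (cmp C s r))"
  note e_props = complement_of_split_idempotent[OF s r rs, folded e_def]
  obtain W r' s' where r': "r' \<in> hom C X W" and s': "s' \<in> hom C W X"
    and s'r': "cmp C s' r' = e" and r's': "cmp C r' s' = idm C W"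
    using idem e_props(1,2) unfolding idem_complete_def by blast
  have r'e: "cmp C r' e = r'" using s'r' comp_assoc[OF r' s' r'] r's' comp_id_left[OF r'] by simp
  have es': "cmp C e s' = s'" using s'r' comp_assoc[OF s' r' s'] r's' comp_id_right[OF s'] by simp
  have "cmp C r' s = mzero C Y W"
    using comp_assoc[OF s e_props(1) r'] r'e e_props(3) comp_zero_right[OF r'] by simp
  moreover have "cmp C r s' = mzero C W Y"
    using comp_assoc[OF s' e_props(1) r] es' e_props(4) comp_zero_left[OF s'] by simp
  ultimately have "is_biproduct C X Y W"
    unfolding is_biproduct_def using s s' r r' rs r's' s'r' e_props(5) by blast
  then show ?thesis ..
qed

lemma additive_subcat_retract:
  assumes "idem_complete C" and "additive_subcat C S" and "X \<in> S"
    and "s \<in> hom C Y X" and "r \<in> hom C X Y" and "cmp C r s = idm C Y"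
  shows "Y \<in> S"
  using retract_is_biproduct_summand[of s Y X r] assms unfolding additive_subcat_def by blast

end

locale right_triangulated_ff =
  fixes C :: "('o,'m) addcat" and So :: "'o \<Rightarrow> 'o" and Sm :: "'m \<Rightarrow> 'm"
    and \<Delta> :: "('o,'m) tri set"
  assumes right_triangulated: "right_triangulated C So Sm \<Delta>"
    and Sm_bij: "bij_betw Sm (hom C A B) (hom C (So A) (So B))"

sublocale right_triangulated_ff \<subseteq> preadditive_cat C
  using right_triangulated unfolding right_triangulated_def is_additive_def
  by unfold_locales (elim conjE)

context right_triangulated_ff
begin

lemma idem_complete: "idem_complete C"
  using right_triangulated unfolding right_triangulated_def by (elim conjE)

lemma zero_obj_exists: "\<exists>Z. is_zero_obj C Z"
  using right_triangulated unfolding right_triangulated_def is_additive_def by (elim conjE)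

lemma Sm_in_hom: "f \<in> hom C A B \<Longrightarrow> Sm f \<in> hom C (So A) (So B)"
  using right_triangulated unfolding right_triangulated_def additive_endofunctor_def
  by (elim conjE) (simp only:)

lemma Sm_id: "Sm (idm C A) = idm C (So A)"
  using right_triangulated unfolding right_triangulated_def additive_endofunctor_def
  by (elim conjE) (simp only:)

lemma Sm_comp: "f \<in> hom C A B \<Longrightarrow> g \<in> hom C B D \<Longrightarrow> Sm (cmp C g f) = cmp C (Sm g) (Sm f)"
  using right_triangulated unfolding right_triangulated_def additive_endofunctor_def
  by (elim conjE) (simp only:)

lemma Sm_add: "f \<in> hom C A B \<Longrightarrow> g \<in> hom C A B \<Longrightarrow> Sm (madd C f g) = madd C (Sm f) (Sm g)"
  using right_triangulated unfolding right_triangulated_def additive_endofunctor_def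
  by (elim conjE) (simp only:)

lemma triangle_homs:
  "(A, B, D, x, y, z) \<in> \<Delta> \<Longrightarrow> x \<in> hom C A B \<and> y \<in> hom C B D \<and> z \<in> hom C D (So A)"
  using right_triangulated unfolding right_triangulated_def is_tri_def by (elim conjE) fastforce

lemma trivial_triangle:
  "is_zero_obj C Z \<Longrightarrow> (A, A, Z, idm C A, mzero C A Z, mzero C Z (So A)) \<in> \<Delta>"
  using right_triangulated unfolding right_triangulated_def by (elim conjE) blast

lemma rotate: "(A, B, D, x, y, z) \<in> \<Delta> \<Longrightarrow> (B, D, So A, y, z, mneg C (Sm x)) \<in> \<Delta>"
  using right_triangulated unfolding right_triangulated_def by (elim conjE) blast

lemma triangle_morphism:
  assumes "(A, B, D, x, y, z) \<in> \<Delta>" and "(A', B', D', x', y', z') \<in> \<Delta>"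
    and "a \<in> hom C A A'" and "b \<in> hom C B B'" and "cmp C b x = cmp C x' a"
  shows "\<exists>c \<in> hom C D D'. cmp C c y = cmp C y' b \<and> cmp C (Sm a) z = cmp C z' c"
proof -
  have "\<forall>A B D x y z A' B' D' x' y' z' a b.
        (A, B, D, x, y, z) \<in> \<Delta> \<longrightarrow> (A', B', D', x', y', z') \<in> \<Delta> \<longrightarrow>
        a \<in> hom C A A' \<longrightarrow> b \<in> hom C B B' \<longrightarrow> cmp C b x = cmp C x' a \<longrightarrow>
        (\<exists>c \<in> hom C D D'. cmp C c y = cmp C y' b \<and> cmp C (Sm a) z = cmp C z' c)"
    using right_triangulated unfolding right_triangulated_def by (elim conjE)
  then show ?thesis using assms by blast
qed

lemma Sm_zero: "Sm (mzero C A B) = mzero C (So A) (So B)"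
  using add_self_eq_zero[OF Sm_in_hom[OF zero_in_hom]] Sm_add[OF zero_in_hom zero_in_hom]
    add_zero_right[OF zero_in_hom]
  by metis

lemma Sm_inj: "f \<in> hom C A B \<Longrightarrow> g \<in> hom C A B \<Longrightarrow> Sm f = Sm g \<Longrightarrow> f = g"
  using Sm_bij bij_betw_imp_inj_on inj_onD by metis

lemma Sm_surj: "c \<in> hom C (So A) (So B) \<Longrightarrow> \<exists>f\<in>hom C A B. c = Sm f"
  using Sm_bij bij_betw_imp_surj_on by (metis imageE)

lemma Sm_reflects_comp:
  assumes f: "f \<in> hom C A B" and g: "g \<in> hom C B D" and h: "h \<in> hom C A D"
    and eq: "Sm h = cmp C (Sm g) (Sm f)"
  shows "h = cmp C g f"
  using Sm_inj[OF h comp_in_hom[OF f g]] eq Sm_comp[OF f g] by simp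

text \<open>Comparing with the rotation \<open>W \<rightarrow> 0 \<rightarrow> \<Sigma>W \<rightarrow> \<Sigma>W\<close> of the trivial triangle yields
\<open>\<Sigma>g = \<Sigma>x \<circ> c\<close>, and \<open>c\<close> comes from \<open>\<Sigma>\<close> by fullness.\<close>
lemma triangle_lift:
  assumes T: "(A, B, D, x, y, z) \<in> \<Delta>" and g: "g \<in> hom C W B"
    and yg: "cmp C y g = mzero C W D"
  shows "\<exists>s\<in>hom C W A. cmp C x s = g"
proof -
  obtain Z where Z: "is_zero_obj C Z" using zero_obj_exists by blast
  have x: "x \<in> hom C A B" using triangle_homs[OF T] by blast
  have Sg: "Sm g \<in> hom C (So W) (So B)" and Sx: "Sm x \<in> hom C (So A) (So B)"
    using Sm_in_hom g x by blast+
  have "cmp C (mzero C Z D) (mzero C W Z) = cmp C y g"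
    using comp_zero_left[OF zero_in_hom] yg by simp
  then obtain c where c: "c \<in> hom C (So W) (So A)"
    and c_comm: "cmp C (Sm g) (mneg C (Sm (idm C W))) = cmp C (mneg C (Sm x)) c"
    using triangle_morphism[OF rotate[OF trivial_triangle[OF Z]] rotate[OF T] g zero_in_hom]
    by blast
  have "mneg C (Sm g) = mneg C (cmp C (Sm x) c)"
    using c_comm comp_neg_right[OF id_in_hom Sg] comp_id_right[OF Sg] comp_neg_left[OF c Sx] Sm_id
    by simp
  then have "Sm g = cmp C (Sm x) c"
    using neg_cancel[OF Sg comp_in_hom[OF c Sx]] by blast
  moreover obtain s where s: "s \<in> hom C W A" and "c = Sm s" using Sm_surj[OF c] by blast
  ultimately have "g = cmp C x s" using Sm_reflects_comp[OF s x g] by simp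
  with s show ?thesis by blast
qed

text \<open>Dually, compare the third rotation \<open>\<Sigma>A \<rightarrow> \<Sigma>B \<rightarrow> \<Sigma>D \<rightarrow> \<Sigma>\<^sup>2A\<close> with the second rotation
\<open>0 \<rightarrow> \<Sigma>W \<rightarrow> \<Sigma>W \<rightarrow> \<Sigma>0\<close> of the trivial triangle on \<open>W\<close>.\<close>
lemma triangle_extend:
  assumes T: "(A, B, D, x, y, z) \<in> \<Delta>" and g: "g \<in> hom C B W"
    and gx: "cmp C g x = mzero C A W"
  shows "\<exists>c\<in>hom C D W. cmp C c y = g"
proof -
  obtain Z where Z: "is_zero_obj C Z" using zero_obj_exists by blast
  have x: "x \<in> hom C A B" and y: "y \<in> hom C B D" using triangle_homs[OF T] by blast+
  have Sg: "Sm g \<in> hom C (So B) (So W)" and Sx: "Sm x \<in> hom C (So A) (So B)"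
    and Sy: "Sm y \<in> hom C (So B) (So D)"
    using Sm_in_hom g x y by blast+
  have "cmp C (Sm g) (mneg C (Sm x)) = mneg C (Sm (cmp C g x))"
    using comp_neg_right[OF Sx Sg] Sm_comp[OF x g] by simp
  also have "\<dots> = cmp C (mzero C Z (So W)) (mzero C (So A) Z)"
    using gx Sm_zero neg_zero comp_zero_left[OF zero_in_hom] by simp
  finally obtain c where c: "c \<in> hom C (So D) (So W)"
    and c_comm: "cmp C c (mneg C (Sm y)) = cmp C (mneg C (Sm (idm C W))) (Sm g)"
    using triangle_morphism[OF rotate[OF rotate[OF rotate[OF T]]]
        rotate[OF rotate[OF trivial_triangle[OF Z]]] zero_in_hom Sg]
    by blast
  have "mneg C (cmp C c (Sm y)) = mneg C (Sm g)"
    using c_comm comp_neg_right[OF Sy c] comp_neg_left[OF Sg id_in_hom] comp_id_left[OF Sg] Sm_id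
    by simp
  then have "Sm g = cmp C c (Sm y)"
    using neg_cancel[OF comp_in_hom[OF Sy c] Sg] by simp
  moreover obtain c' where c': "c' \<in> hom C D W" and "c = Sm c'" using Sm_surj[OF c] by blast
  ultimately have "g = cmp C c' y" using Sm_reflects_comp[OF y c' g] by simp
  with c' show ?thesis by blast
qed

lemma iso_objs_refl: "iso_objs C A A"
  unfolding iso_objs_def is_iso_def using id_in_hom comp_id_right[OF id_in_hom] by blast

lemma torsion_pair_hom_zero:
  "torsion_pair C So \<Delta> U V \<Longrightarrow> X \<in> U \<Longrightarrow> Y \<in> V \<Longrightarrow> f \<in> hom C X Y \<Longrightarrow> f = mzero C X Y"
  unfolding torsion_pair_def hom_vanish_def by blast

lemma torsion_pair_triangle:
  "torsion_pair C So \<Delta> U V \<Longrightarrow> \<exists>X Y f g h. X \<in> U \<and> Y \<in> V \<and> (X, D, Y, f, g, h) \<in> \<Delta>"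
  unfolding torsion_pair_def by blast

text \<open>If \<open>\<R>(\<U>, Y) = 0\<close>, the first map of the torsion triangle \<open>X \<rightarrow> Y \<rightarrow> Y' \<rightarrow> \<Sigma>X\<close> vanishes,
so \<open>Y\<close> is a retract of \<open>Y' \<in> \<V>\<close>.\<close>
lemma torsion_pair_mem_V:
  assumes tp: "torsion_pair C So \<Delta> U V"
    and Y: "\<forall>X\<in>U. \<forall>f\<in>hom C X Y. f = mzero C X Y"
  shows "Y \<in> V"
proof -
  obtain X Y' f g h where X: "X \<in> U" and Y': "Y' \<in> V" and T: "(X, Y, Y', f, g, h) \<in> \<Delta>"
    using torsion_pair_triangle[OF tp] by blast
  have f: "f \<in> hom C X Y" and g: "g \<in> hom C Y Y'" using triangle_homs[OF T] by blast+
  have "cmp C (idm C Y) f = mzero C X Y" using comp_id_left[OF f] Y X f by simp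
  then obtain r where "r \<in> hom C Y' Y" and "cmp C r g = idm C Y"
    using triangle_extend[OF T id_in_hom] by blast
  with tp Y' g show ?thesis
    using additive_subcat_retract[OF idem_complete] unfolding torsion_pair_def by blast
qed

lemma desuspension_closed_if_hom_vanish:
  assumes tp: "torsion_pair C So \<Delta> U V" and hv: "hom_vanish C (So ` U) V"
    and SX: "So X \<in> V"
  shows "X \<in> V"
proof (rule torsion_pair_mem_V[OF tp], intro ballI)
  fix u f assume u: "u \<in> U" and f: "f \<in> hom C u X"
  have "Sm f = mzero C (So u) (So X)"
    using hv u SX Sm_in_hom[OF f] unfolding hom_vanish_def by blast
  then show "f = mzero C u X" using Sm_inj[OF f zero_in_hom] Sm_zero by simp
qed

lemma shift_closed_if_desuspension_closed:
  assumes semi: "right_semi_equivalence C So Sm \<Delta>" and tp: "torsion_pair C So \<Delta> U V"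
    and desusp: "\<forall>X. So X \<in> V \<longrightarrow> X \<in> V" and u: "u \<in> U"
  shows "So u \<in> U"
proof -
  obtain X Y f g h where X: "X \<in> U" and Y: "Y \<in> V" and T: "(X, So u, Y, f, g, h) \<in> \<Delta>"
    using torsion_pair_triangle[OF tp] by blast
  have f: "f \<in> hom C X (So u)" and g: "g \<in> hom C (So u) Y" using triangle_homs[OF T] by blast+
  obtain B where "iso_objs C Y (So B)"
    using semi rotate[OF T] iso_objs_refl unfolding right_semi_equivalence_def by blast
  then obtain \<phi> \<psi> where \<phi>: "\<phi> \<in> hom C Y (So B)" and \<psi>: "\<psi> \<in> hom C (So B) Y"
    and \<psi>\<phi>: "cmp C \<psi> \<phi> = idm C Y" and SB: "So B \<in> V"
    using Y tp unfolding iso_objs_def is_iso_def torsion_pair_def additive_subcat_def by blast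
  obtain k where k: "k \<in> hom C u B" and \<phi>g: "cmp C \<phi> g = Sm k"
    using Sm_surj[OF comp_in_hom[OF g \<phi>]] by blast
  have "k = mzero C u B" using torsion_pair_hom_zero[OF tp u] desusp SB k by blast
  then have "g = cmp C \<psi> (mzero C (So u) (So B))"
    using \<phi>g Sm_zero comp_assoc[OF g \<phi> \<psi>] \<psi>\<phi> comp_id_left[OF g] by simp
  then have "cmp C g (idm C (So u)) = mzero C (So u) Y"
    using comp_zero_right[OF \<psi>] comp_id_right[OF g] by simp
  then obtain s where "s \<in> hom C (So u) X" and "cmp C f s = idm C (So u)"
    using triangle_lift[OF T id_in_hom] by blast
  with tp X f show ?thesis
    using additive_subcat_retract[OF idem_complete] unfolding torsion_pair_def by blast
qed

lemma shift_V_monic_if_hom_vanish: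
  assumes tp: "torsion_pair C So \<Delta> U V" and hv: "hom_vanish C (So ` U) V"
    and mono: "V_monic C V A B f"
  shows "V_monic C V (So A) (So B) (Sm f)"
  unfolding V_monic_def
proof (intro conjI ballI)
  have f: "f \<in> hom C A B" using mono unfolding V_monic_def by blast
  then show "Sm f \<in> hom C (So A) (So B)" by (rule Sm_in_hom)
  fix Y g assume Y: "Y \<in> V" and g: "g \<in> hom C (So A) Y"
  obtain X Y' \<alpha> \<beta> \<gamma> where X: "X \<in> U" and Y': "Y' \<in> V" and T: "(X, A, Y', \<alpha>, \<beta>, \<gamma>) \<in> \<Delta>"
    using torsion_pair_triangle[OF tp] by blast
  have \<alpha>: "\<alpha> \<in> hom C X A" and \<beta>: "\<beta> \<in> hom C A Y'" using triangle_homs[OF T] by blast+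
  have S\<alpha>: "Sm \<alpha> \<in> hom C (So X) (So A)" and S\<beta>: "Sm \<beta> \<in> hom C (So A) (So Y')"
    using Sm_in_hom \<alpha> \<beta> by blast+
  have "cmp C g (Sm \<alpha>) = mzero C (So X) Y"
    using hv X Y comp_in_hom[OF S\<alpha> g] unfolding hom_vanish_def by blast
  then have "cmp C g (mneg C (Sm \<alpha>)) = mzero C (So X) Y"
    using comp_neg_right[OF S\<alpha> g] neg_zero by simp
  then obtain c where c: "c \<in> hom C (So Y') Y" and c\<beta>: "cmp C c (mneg C (Sm \<beta>)) = g"
    using triangle_extend[OF rotate[OF rotate[OF rotate[OF T]]] g] by blast
  obtain h where h: "h \<in> hom C B Y'" and hf: "cmp C h f = \<beta>"
    using mono Y' \<beta> unfolding V_monic_def by blast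
  have Sh: "Sm h \<in> hom C (So B) (So Y')" using Sm_in_hom[OF h] .
  have ch: "cmp C c (Sm h) \<in> hom C (So B) Y" using comp_in_hom[OF Sh c] .
  have "cmp C (mneg C (cmp C c (Sm h))) (Sm f) = mneg C (cmp C c (cmp C (Sm h) (Sm f)))"
    using comp_neg_left[OF Sm_in_hom[OF f] ch] comp_assoc[OF Sm_in_hom[OF f] Sh c] by simp
  also have "\<dots> = g" using Sm_comp[OF f h] hf c\<beta> comp_neg_right[OF S\<beta> c] by simp
  finally show "\<exists>k\<in>hom C (So B) Y. cmp C k (Sm f) = g" using neg_in_hom[OF ch] by blast
qed

lemma hom_vanish_if_shift_V_monic:
  assumes tp: "torsion_pair C So \<Delta> U V"
    and shift_mono: "\<forall>A B f. V_monic C V A B f \<longrightarrow> V_monic C V (So A) (So B) (Sm f)"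
  shows "hom_vanish C (So ` U) V"
  unfolding hom_vanish_def
proof (intro ballI)
  fix X Y assume "X \<in> So ` U" and Y: "Y \<in> V"
  then obtain u where u: "u \<in> U" and X: "X = So u" by blast
  obtain Z where "is_zero_obj C Z" using zero_obj_exists by blast
  have "V_monic C V u Z (mzero C u Z)"
    unfolding V_monic_def
    using zero_in_hom comp_zero_left[OF zero_in_hom] torsion_pair_hom_zero[OF tp u] by metis
  then have mono: "V_monic C V (So u) (So Z) (mzero C (So u) (So Z))"
    using shift_mono Sm_zero by metis
  have "f = mzero C X Y" if f: "f \<in> hom C X Y" for f
  proof -
    obtain k where "k \<in> hom C (So Z) Y" and "cmp C k (mzero C (So u) (So Z)) = f"
      using mono Y f X unfolding V_monic_def by blast
    then show ?thesis using comp_zero_right X by blast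
  qed
  then show "hom C X Y = {mzero C X Y}" using zero_in_hom by blast
qed

end

theorem mainTheorem11:
  fixes C :: "('o,'m) addcat" and So :: "'o \<Rightarrow> 'o" and Sm :: "'m \<Rightarrow> 'm"
    and \<Delta> :: "('o,'m) tri set" and U V :: "'o set"
  assumes "right_triangulated C So Sm \<Delta>"
    and "right_semi_equivalence C So Sm \<Delta>"
    and "torsion_pair C So \<Delta> U V"
  shows "((\<forall>X\<in>U. So X \<in> U) \<longleftrightarrow> (\<forall>X. So X \<in> V \<longrightarrow> X \<in> V))
       \<and> ((\<forall>X. So X \<in> V \<longrightarrow> X \<in> V) \<longleftrightarrow> hom_vanish C (So ` U) V)
       \<and> (hom_vanish C (So ` U) V \<longleftrightarrow>
            (\<forall>A B f. V_monic C V A B f \<longrightarrow> V_monic C V (So A) (So B) (Sm f)))"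
proof -
  interpret right_triangulated_ff C So Sm \<Delta>
    using assms(1,2) unfolding right_semi_equivalence_def by unfold_locales blast+
  have a_c: "hom_vanish C (So ` U) V" if "\<forall>X\<in>U. So X \<in> U"
    using that assms(3) unfolding torsion_pair_def hom_vanish_def by blast
  have c_b: "\<forall>X. So X \<in> V \<longrightarrow> X \<in> V" if "hom_vanish C (So ` U) V"
    using desuspension_closed_if_hom_vanish[OF assms(3) that] by blast
  have b_a: "\<forall>X\<in>U. So X \<in> U" if "\<forall>X. So X \<in> V \<longrightarrow> X \<in> V"
    using shift_closed_if_desuspension_closed[OF assms(2,3) that] by blast
  have c_d: "\<forall>A B f. V_monic C V A B f \<longrightarrow> V_monic C V (So A) (So B) (Sm f)"
    if "hom_vanish C (So ` U) V"
    using shift_V_monic_if_hom_vanish[OF assms(3) that] by blast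
  show ?thesis
    using a_c c_b b_a c_d hom_vanish_if_shift_V_monic[OF assms(3)] by blast
qed

end
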